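(* Let $G$ be a simple graph with adjacency matrix $A$. If $\mathrm{LCP}(A+I,-\mathbf{e})$ is w-unique, then $\mathbf{e}^\top x$ is constant over all solutions $x$ of $\mathrm{LCP}(A+I,-\mathbf{e})$, and consequently $G$ is well-covered.
   Context: $x$ solves $\mathrm{LCP}(M,q)$ if $x\geq 0$, $Mx+q\geq 0$ and $x^\top(Mx+q)=0$; here $M=A+I$, $q=-\mathbf{e}$ ($I$ identity, $\mathbf{e}$ all-ones vector). $\mathrm{LCP}(M,q)$ is w-unique if the vector $Mx+q$ is the same for all solutions $x$. A graph is well-covered if all its maximal independent sets have the same cardinality. *)

theory Defs
  imports Complex_Main
begin

text \<open>A finite simple graph on the (finite) vertex type 'v, given by a symmetric,
irreflexive adjacency relation E. Vectors in R^V are functions 'v => real,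
square matrices are functions 'v => 'v => real.\<close>

definition simple_graph :: "('v::finite \<Rightarrow> 'v \<Rightarrow> bool) \<Rightarrow> bool" where
  "simple_graph E \<longleftrightarrow> (\<forall>u v. E u v \<longleftrightarrow> E v u) \<and> (\<forall>v. \<not> E v v)"

definition adj_matrix :: "('v::finite \<Rightarrow> 'v \<Rightarrow> bool) \<Rightarrow> 'v \<Rightarrow> 'v \<Rightarrow> real" where
  "adj_matrix E u v = (if E u v then 1 else 0)"

definition id_matrix :: "'v::finite \<Rightarrow> 'v \<Rightarrow> real" where
  "id_matrix u v = (if u = v then 1 else 0)"

definition all_ones :: "'v::finite \<Rightarrow> real" where
  "all_ones v = 1"

definition lcp_w :: "('v::finite \<Rightarrow> 'v \<Rightarrow> real) \<Rightarrow> ('v \<Rightarrow> real) \<Rightarrow> ('v \<Rightarrow> real) \<Rightarrow> 'v \<Rightarrow> real" where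
  "lcp_w M q x i = (\<Sum>j\<in>UNIV. M i j * x j) + q i"

definition solves_LCP :: "('v::finite \<Rightarrow> 'v \<Rightarrow> real) \<Rightarrow> ('v \<Rightarrow> real) \<Rightarrow> ('v \<Rightarrow> real) \<Rightarrow> bool" where
  "solves_LCP M q x \<longleftrightarrow> (\<forall>i. x i \<ge> 0) \<and> (\<forall>i. lcp_w M q x i \<ge> 0)
     \<and> (\<Sum>i\<in>UNIV. x i * lcp_w M q x i) = 0"

definition w_unique :: "('v::finite \<Rightarrow> 'v \<Rightarrow> real) \<Rightarrow> ('v \<Rightarrow> real) \<Rightarrow> bool" where
  "w_unique M q \<longleftrightarrow> (\<forall>x y. solves_LCP M q x \<and> solves_LCP M q y \<longrightarrow> lcp_w M q x = lcp_w M q y)"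

definition independent_set :: "('v \<Rightarrow> 'v \<Rightarrow> bool) \<Rightarrow> 'v set \<Rightarrow> bool" where
  "independent_set E S \<longleftrightarrow> (\<forall>u\<in>S. \<forall>v\<in>S. \<not> E u v)"

definition maximal_independent_set :: "('v \<Rightarrow> 'v \<Rightarrow> bool) \<Rightarrow> 'v set \<Rightarrow> bool" where
  "maximal_independent_set E S \<longleftrightarrow> independent_set E S \<and>
     (\<forall>T. independent_set E T \<and> S \<subseteq> T \<longrightarrow> T = S)"

definition well_covered :: "('v::finite \<Rightarrow> 'v \<Rightarrow> bool) \<Rightarrow> bool" where
  "well_covered E \<longleftrightarrow> (\<forall>S T. maximal_independent_set E S \<and> maximal_independent_set E T
     \<longrightarrow> card S = card T)"

end

theory Submission
  imports Defs
begin

text \<open>For symmetric M, two LCP solutions x, y with the same w = Mx + q = My + q satisfy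
  x'(My + q) = 0 and y'(Mx + q) = 0; since x'My = y'Mx this forces q'x = q'y. The incidence vector of
  every maximal independent set solves LCP(A + I, -e), with e'x its cardinality, so all
  maximal independent sets have the same size.\<close>

lemma sum_mult_lcp_w:
  fixes M :: "'v::finite \<Rightarrow> 'v \<Rightarrow> real"
  shows "(\<Sum>i\<in>UNIV. x i * lcp_w M q y i)
       = (\<Sum>i\<in>UNIV. x i * (\<Sum>j\<in>UNIV. M i j * y j)) + (\<Sum>i\<in>UNIV. q i * x i)"
  by (simp add: lcp_w_def distrib_left sum.distrib mult.commute)

lemma sum_mult_sym_matrix_swap:
  fixes M :: "'v::finite \<Rightarrow> 'v \<Rightarrow> real"
  assumes "\<And>i j. M i j = M j i"
  shows "(\<Sum>i\<in>UNIV. x i * (\<Sum>j\<in>UNIV. M i j * y j)) = (\<Sum>i\<in>UNIV. y i * (\<Sum>j\<in>UNIV. M i j * x j))"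
proof -
  have "(\<Sum>i\<in>UNIV. x i * (\<Sum>j\<in>UNIV. M i j * y j)) = (\<Sum>i\<in>UNIV. \<Sum>j\<in>UNIV. x i * M i j * y j)"
    by (simp add: sum_distrib_left mult.assoc)
  also have "\<dots> = (\<Sum>j\<in>UNIV. \<Sum>i\<in>UNIV. x i * M i j * y j)"
    by (rule sum.swap)
  also have "\<dots> = (\<Sum>j\<in>UNIV. y j * (\<Sum>i\<in>UNIV. M j i * x i))"
    by (simp add: sum_distrib_left assms algebra_simps)
  finally show ?thesis .
qed

lemma solves_LCP_same_w_imp_objective_eq:
  fixes M :: "'v::finite \<Rightarrow> 'v \<Rightarrow> real"
  assumes sym: "\<And>i j. M i j = M j i"
    and x: "solves_LCP M q x" and y: "solves_LCP M q y"
    and w: "lcp_w M q x = lcp_w M q y"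
  shows "(\<Sum>i\<in>UNIV. q i * x i) = (\<Sum>i\<in>UNIV. q i * y i)"
proof -
  have "(\<Sum>i\<in>UNIV. x i * lcp_w M q y i) = 0" "(\<Sum>i\<in>UNIV. y i * lcp_w M q x i) = 0"
    using x y w by (simp_all add: solves_LCP_def)
  then show ?thesis
    using sum_mult_sym_matrix_swap[OF sym, where x=x and y=y] by (simp add: sum_mult_lcp_w)
qed

lemma lcp_w_adj_matrix_plus_id:
  "lcp_w (\<lambda>i j. adj_matrix E i j + id_matrix i j) q x i
     = x i + (\<Sum>j\<in>UNIV. adj_matrix E i j * x j) + q i"
proof -
  have "(\<Sum>j\<in>UNIV. id_matrix i j * x j) = x i"
    by (simp add: id_matrix_def if_distrib[where f="\<lambda>a. a * _"] cong: if_cong)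
  then show ?thesis
    by (simp add: lcp_w_def distrib_right sum.distrib)
qed

lemma maximal_independent_set_dominating:
  assumes "simple_graph E" "maximal_independent_set E S" "v \<notin> S"
  shows "\<exists>u\<in>S. E v u"
proof -
  have indS: "independent_set E S"
    using assms(2) by (simp add: maximal_independent_set_def)
  have "\<not> independent_set E (insert v S)"
    using assms(2,3) unfolding maximal_independent_set_def by blast
  with indS assms(1) show ?thesis
    unfolding independent_set_def simple_graph_def by auto
qed

lemma maximal_independent_set_solves_LCP:
  assumes "simple_graph E" "maximal_independent_set E S"
  shows "solves_LCP (\<lambda>i j. adj_matrix E i j + id_matrix i j) (\<lambda>i. - all_ones i)
           (\<lambda>i. of_bool (i \<in> S))"
    (is "solves_LCP ?M ?q ?x")
proof -
  have indS: "independent_set E S"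
    using assms(2) by (simp add: maximal_independent_set_def)
  have adj_sum: "(\<Sum>u\<in>UNIV. adj_matrix E v u * ?x u) = real (card {u\<in>S. E v u})" for v
    by (simp add: adj_matrix_def sum.If_cases Int_def)
  have w: "lcp_w ?M ?q ?x v = of_bool (v \<in> S) + real (card {u\<in>S. E v u}) - 1" for v
    by (simp add: lcp_w_adj_matrix_plus_id adj_sum all_ones_def)
  have in_S: "lcp_w ?M ?q ?x v = 0" if "v \<in> S" for v
  proof -
    have "{u\<in>S. E v u} = {}"
      using indS that by (auto simp: independent_set_def)
    then show ?thesis
      using that by (simp add: w)
  qed
  have not_in_S: "lcp_w ?M ?q ?x v \<ge> 0" if "v \<notin> S" for v
  proof -
    have "{u\<in>S. E v u} \<noteq> {}"
      using maximal_independent_set_dominating[OF assms that] by blast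
    then have "card {u\<in>S. E v u} \<ge> 1"
      by (simp add: Suc_le_eq card_gt_0_iff)
    then show ?thesis
      using that by (simp add: w)
  qed
  have "(\<Sum>v\<in>UNIV. ?x v * lcp_w ?M ?q ?x v) = 0"
    using in_S by (intro sum.neutral) auto
  moreover have "lcp_w ?M ?q ?x v \<ge> 0" for v
    using in_S not_in_S by (cases "v \<in> S") auto
  ultimately show ?thesis
    by (simp add: solves_LCP_def)
qed

theorem lemma8:
  fixes E :: "'v::finite \<Rightarrow> 'v \<Rightarrow> bool"
  assumes "simple_graph E"
    and "w_unique (\<lambda>i j. adj_matrix E i j + id_matrix i j) (\<lambda>i. - all_ones i)"
  shows "(\<forall>x y. solves_LCP (\<lambda>i j. adj_matrix E i j + id_matrix i j) (\<lambda>i. - all_ones i) x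
              \<and> solves_LCP (\<lambda>i j. adj_matrix E i j + id_matrix i j) (\<lambda>i. - all_ones i) y
            \<longrightarrow> (\<Sum>i\<in>UNIV. all_ones i * x i) = (\<Sum>i\<in>UNIV. all_ones i * y i))
         \<and> well_covered E"
    (is "?const \<and> _")
proof
  have sym: "\<And>i j. adj_matrix E i j + id_matrix i j = adj_matrix E j i + id_matrix j i"
    using assms(1) by (simp add: simple_graph_def adj_matrix_def id_matrix_def eq_commute)
  show ?const
  proof (intro allI impI)
    fix x y
    assume "solves_LCP (\<lambda>i j. adj_matrix E i j + id_matrix i j) (\<lambda>i. - all_ones i) x
          \<and> solves_LCP (\<lambda>i j. adj_matrix E i j + id_matrix i j) (\<lambda>i. - all_ones i) y"
    moreover from this assms(2)
    have "lcp_w (\<lambda>i j. adj_matrix E i j + id_matrix i j) (\<lambda>i. - all_ones i) x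
        = lcp_w (\<lambda>i j. adj_matrix E i j + id_matrix i j) (\<lambda>i. - all_ones i) y"
      unfolding w_unique_def by blast
    ultimately have "(\<Sum>i\<in>UNIV. - all_ones i * x i) = (\<Sum>i\<in>UNIV. - all_ones i * y i)"
      using solves_LCP_same_w_imp_objective_eq[where M = "\<lambda>i j. adj_matrix E i j + id_matrix i j", OF sym]
      by blast
    then show "(\<Sum>i\<in>UNIV. all_ones i * x i) = (\<Sum>i\<in>UNIV. all_ones i * y i)"
      by (simp add: sum_negf)
  qed
  show "well_covered E"
    unfolding well_covered_def
  proof (intro allI impI)
    fix S T
    assume "maximal_independent_set E S \<and> maximal_independent_set E T"
    with \<open>?const\<close> maximal_independent_set_solves_LCP[OF assms(1)]
    have "(\<Sum>i\<in>UNIV. all_ones i * of_bool (i \<in> S)) = (\<Sum>i\<in>UNIV. all_ones i * of_bool (i \<in> T))"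
      by blast
    then show "card S = card T"
      by (simp add: all_ones_def)
  qed
qed

end
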